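(* Let $T$ be a tree of order $n\geq 3$ and let $\mathcal{G}$ be an arbitrary Abelian group of order at least $4$. Then there exists a labeling $f\colon E(T)\to\mathcal{G}\setminus\{0\}$ such that $w_f(u)\neq w_f(v)$ for every edge $uv$ of $T$.
   Context: $w_f(v)=\sum_{u\in N(v)}f(uv)$, the sum taken in $\mathcal{G}$; $0$ is the identity of $\mathcal{G}$. *)

theory Defs
  imports Main
begin

definition simple_graph :: "'a set \<Rightarrow> 'a set set \<Rightarrow> bool" where
  "simple_graph V E \<longleftrightarrow> finite V \<and>
     (\<forall>e\<in>E. \<exists>u v. u \<in> V \<and> v \<in> V \<and> u \<noteq> v \<and> e = {u, v})"

definition is_walk :: "'a set \<Rightarrow> 'a set set \<Rightarrow> 'a list \<Rightarrow> bool" where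
  "is_walk V E p \<longleftrightarrow> p \<noteq> [] \<and> set p \<subseteq> V \<and>
     (\<forall>i. Suc i < length p \<longrightarrow> {p ! i, p ! Suc i} \<in> E)"

definition connected_graph :: "'a set \<Rightarrow> 'a set set \<Rightarrow> bool" where
  "connected_graph V E \<longleftrightarrow>
     (\<forall>u\<in>V. \<forall>v\<in>V. \<exists>p. is_walk V E p \<and> hd p = u \<and> last p = v)"

definition is_cycle :: "'a set \<Rightarrow> 'a set set \<Rightarrow> 'a list \<Rightarrow> bool" where
  "is_cycle V E c \<longleftrightarrow> is_walk V E c \<and> distinct c \<and> length c \<ge> 3 \<and>
     {last c, hd c} \<in> E"

definition acyclic_graph :: "'a set \<Rightarrow> 'a set set \<Rightarrow> bool" where
  "acyclic_graph V E \<longleftrightarrow> (\<nexists>c. is_cycle V E c)"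

definition tree :: "'a set \<Rightarrow> 'a set set \<Rightarrow> bool" where
  "tree V E \<longleftrightarrow> simple_graph V E \<and> connected_graph V E \<and> acyclic_graph V E"

text \<open>Weighted degree: w_f(v) = sum of f(uv) over neighbours u of v, i.e. over edges containing v.\<close>
definition wsum :: "'a set set \<Rightarrow> ('a set \<Rightarrow> 'g::comm_monoid_add) \<Rightarrow> 'a \<Rightarrow> 'g" where
  "wsum E f v = (\<Sum>e\<in>{e\<in>E. v \<in> e}. f e)"

end

theory Submission
  imports Defs
begin

text \<open>A tree with at least three vertices is a forest without isolated edges; we induct on the
  number of edges of such forests. Let \<open>u\<close> and \<open>y\<close> be the second and third vertices of a longest
  path. All other neighbours of \<open>u\<close> are leaves; removing them (the set \<open>L\<close>) leaves \<open>u\<close> as a leaf at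
  \<open>y\<close>, and if \<open>y\<close> has no other neighbour, the then isolated edge \<open>uy\<close> is removed as well. A
  labeling of the smaller forest extends: all edges from \<open>u\<close> to \<open>L\<close> but one get a common label
  \<open>c \<noteq> 0\<close> with \<open>f(uy) + (|L| - 1) c \<noteq> 0\<close>, and the last one a label \<open>z \<noteq> 0\<close> making
  \<open>w(u) = f(uy) + (|L| - 1) c + z\<close> differ from \<open>w(y)\<close>, \<open>c\<close> and \<open>z\<close>. In a group of order at
  least 4 both choices are possible, since three values can always be avoided.\<close>

lemma ex_not_in_three:
  assumes "infinite (UNIV :: 'a set) \<or> card (UNIV :: 'a set) \<ge> 4"
  shows "\<exists>x::'a. x \<noteq> p \<and> x \<noteq> q \<and> x \<noteq> r"
proof (cases "finite (UNIV :: 'a set)")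
  case True
  have "card {p, q, r} \<le> 3"
    using card_length[of "[p, q, r]"] by simp
  with True assms have "{p, q, r} \<noteq> UNIV"
    by auto
  then show ?thesis
    by blast
next
  case False
  then show ?thesis
    using ex_new_if_finite[of "{p, q, r}"] by auto
qed

text \<open>If \<open>b + |A| c = 0\<close> for two nonzero \<open>c\<close> with nonzero sum, then also for their sum, and
  subtracting gives \<open>b = 0\<close>.\<close>
lemma ex_nonzero_not_cancelling:
  fixes b :: "'g::ab_group_add"
  assumes "infinite (UNIV :: 'g set) \<or> card (UNIV :: 'g set) \<ge> 4" and "b \<noteq> 0"
  shows "\<exists>c. c \<noteq> 0 \<and> b + (\<Sum>_\<in>A. c) \<noteq> 0"
proof (rule ccontr)
  assume cancel: "\<nexists>c. c \<noteq> 0 \<and> b + (\<Sum>_\<in>A. c) \<noteq> 0"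
  obtain c\<^sub>1 :: 'g where "c\<^sub>1 \<noteq> 0"
    using ex_not_in_three[OF assms(1)] by blast
  moreover obtain c\<^sub>2 where "c\<^sub>2 \<noteq> 0" "c\<^sub>2 \<noteq> - c\<^sub>1"
    using ex_not_in_three[OF assms(1)] by blast
  moreover from this have "c\<^sub>1 + c\<^sub>2 \<noteq> 0"
    by (simp add: add_eq_0_iff)
  ultimately have "b + (\<Sum>_\<in>A. c\<^sub>1) = 0" "b + (\<Sum>_\<in>A. c\<^sub>2) = 0" "b + (\<Sum>_\<in>A. c\<^sub>1 + c\<^sub>2) = 0"
    using cancel by blast+
  moreover have "b = (b + (\<Sum>_\<in>A. c\<^sub>1)) + (b + (\<Sum>_\<in>A. c\<^sub>2)) - (b + (\<Sum>_\<in>A. c\<^sub>1 + c\<^sub>2))"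
    by (simp add: sum.distrib algebra_simps)
  ultimately have "b = 0"
    by simp
  with \<open>b \<noteq> 0\<close> show False ..
qed

lemma ex_pendant_star_weights:
  fixes b :: "'g::ab_group_add"
  assumes "infinite (UNIV :: 'g set) \<or> card (UNIV :: 'g set) \<ge> 4" and "b \<noteq> 0"
  obtains c z where "c \<noteq> 0" "z \<noteq> 0" "b + (\<Sum>_\<in>A. c) \<noteq> 0"
    "b + (\<Sum>_\<in>A. c) + z \<noteq> t" "b + (\<Sum>_\<in>A. c) + z \<noteq> c"
proof -
  obtain c where c: "c \<noteq> 0" "b + (\<Sum>_\<in>A. c) \<noteq> 0"
    using ex_nonzero_not_cancelling[OF assms] by blast
  moreover obtain z where "z \<noteq> 0" "z \<noteq> t - (b + (\<Sum>_\<in>A. c))" "z \<noteq> c - (b + (\<Sum>_\<in>A. c))"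
    using ex_not_in_three[OF assms(1)] by blast
  ultimately show thesis
    using that by (metis add_diff_cancel_left')
qed

lemma simple_graph_edgeD:
  "simple_graph V E \<Longrightarrow> {x, y} \<in> E \<Longrightarrow> x \<in> V \<and> y \<in> V \<and> x \<noteq> y"
  unfolding simple_graph_def by (metis doubleton_eq_iff)

lemma simple_graph_edge_other_end:
  assumes "simple_graph V E" "e \<in> E" "x \<in> e"
  obtains z where "e = {x, z}" "z \<noteq> x"
  using assms unfolding simple_graph_def by (metis insert_commute insert_iff singletonD)

lemma simple_graph_subset: "simple_graph V E \<Longrightarrow> E' \<subseteq> E \<Longrightarrow> simple_graph V E'"
  unfolding simple_graph_def by blast

lemma simple_graph_finite_edges:
  assumes "simple_graph V E"
  shows "finite E"
proof -
  have "E \<subseteq> Pow V" and "finite V"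
    using assms unfolding simple_graph_def by auto
  then show ?thesis
    using finite_subset by blast
qed

lemma acyclic_graph_subset: "acyclic_graph V E \<Longrightarrow> E' \<subseteq> E \<Longrightarrow> acyclic_graph V E'"
  unfolding acyclic_graph_def is_cycle_def is_walk_def by blast

lemma is_walk_Cons:
  assumes "p \<noteq> []"
  shows "is_walk V E (x # p) \<longleftrightarrow> x \<in> V \<and> {x, hd p} \<in> E \<and> is_walk V E p"
  using assms unfolding is_walk_def
  by (auto simp: hd_conv_nth nth_Cons split: nat.splits)

lemma chord_not_acyclic:
  assumes "is_walk V E p" "distinct p" "i + 2 \<le> j" "j < length p" "{p ! j, p ! i} \<in> E"
  shows "\<not> acyclic_graph V E"
proof -
  define c where "c = take (j - i + 1) (drop i p)"
  have len: "length c = j - i + 1"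
    unfolding c_def using assms(3,4) by simp
  have nth_c: "c ! k = p ! (i + k)" if "k \<le> j - i" for k
    unfolding c_def using that assms(3,4) by simp
  have "is_walk V E c"
    unfolding is_walk_def
  proof (intro conjI allI impI)
    show "c \<noteq> []"
      using len by auto
    have "set c \<subseteq> set p"
      unfolding c_def by (meson set_drop_subset set_take_subset subset_trans)
    then show "set c \<subseteq> V"
      using assms(1) unfolding is_walk_def by auto
    fix k
    assume k: "Suc k < length c"
    then have "{p ! (i + k), p ! Suc (i + k)} \<in> E"
      using assms(1,4) len unfolding is_walk_def by auto
    then show "{c ! k, c ! Suc k} \<in> E"
      using nth_c[of k] nth_c[of "Suc k"] k len by simp
  qed
  moreover have "hd c = p ! i"
    using nth_c[of 0] len by (subst hd_conv_nth) auto
  moreover have "last c = p ! j"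
    using nth_c[of "j - i"] len assms(3) by (subst last_conv_nth) auto
  ultimately have "is_cycle V E c"
    unfolding is_cycle_def using assms(2,3,5) len by (simp add: c_def)
  then show ?thesis
    unfolding acyclic_graph_def by blast
qed

definition longest_path :: "'a set \<Rightarrow> 'a set set \<Rightarrow> 'a list \<Rightarrow> bool" where
  "longest_path V E p \<longleftrightarrow> is_walk V E p \<and> distinct p \<and>
     (\<forall>q. is_walk V E q \<and> distinct q \<longrightarrow> length q \<le> length p)"

lemma longest_path_exists:
  assumes "simple_graph V E" "E \<noteq> {}"
  obtains p where "longest_path V E p" "length p \<ge> 2"
proof -
  define is_path_length where
    "is_path_length n \<longleftrightarrow> (\<exists>q. is_walk V E q \<and> distinct q \<and> length q = n)" for n
  obtain e where "e \<in> E"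
    using assms(2) by blast
  then obtain a b where "e = {a, b}"
    using assms(1) unfolding simple_graph_def by metis
  with \<open>e \<in> E\<close> have "is_walk V E [a, b]" "distinct [a, b]"
    using simple_graph_edgeD[OF assms(1)] unfolding is_walk_def by (auto simp: less_Suc_eq)
  then have two: "is_path_length 2"
    unfolding is_path_length_def by (metis length_Cons list.size(3) numeral_2_eq_2)
  have bounded: "n \<le> card V" if path: "is_path_length n" for n
  proof -
    obtain q where q: "is_walk V E q" "distinct q" "length q = n"
      using path unfolding is_path_length_def by blast
    then have "length q = card (set q)"
      by (simp add: distinct_card)
    also have "\<dots> \<le> card V"
      using q(1) assms(1) unfolding is_walk_def simple_graph_def by (intro card_mono) auto
    finally show ?thesis
      using q(3) by simp
  qed
  obtain n where n: "is_path_length n" and maximal: "\<forall>m. is_path_length m \<longrightarrow> m \<le> n"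
    using Nat.ex_has_greatest_nat[of is_path_length 2 "card V"] two bounded by blast
  then obtain p where p: "is_walk V E p" "distinct p" "length p = n"
    unfolding is_path_length_def by blast
  moreover have "length q \<le> n" if "is_walk V E q" "distinct q" for q
    using maximal that unfolding is_path_length_def by blast
  moreover have "n \<ge> 2"
    using maximal two by blast
  ultimately show thesis
    using that[of p] unfolding longest_path_def by simp
qed

lemma longest_path_hd_neighbour:
  assumes "simple_graph V E" "acyclic_graph V E" "longest_path V E p" "length p \<ge> 2"
    and "{x, hd p} \<in> E"
  shows "x = p ! 1"
proof (rule ccontr)
  assume "x \<noteq> p ! 1"
  have walk: "is_walk V E p" "distinct p" and "p \<noteq> []"
    using assms(3,4) unfolding longest_path_def by auto
  show False
  proof (cases "x \<in> set p")
    case False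
    then have "is_walk V E (x # p)" "distinct (x # p)"
      using walk is_walk_Cons[OF \<open>p \<noteq> []\<close>] assms(5) simple_graph_edgeD[OF assms(1)] by auto
    then show False
      using assms(3) unfolding longest_path_def by fastforce
  next
    case True
    then obtain j where j: "j < length p" "p ! j = x"
      by (metis in_set_conv_nth)
    have "x \<noteq> hd p"
      using simple_graph_edgeD[OF assms(1,5)] by simp
    then have "j \<noteq> 0"
      using j \<open>p \<noteq> []\<close> by (metis hd_conv_nth)
    moreover have "j \<noteq> 1"
      using j \<open>x \<noteq> p ! 1\<close> by auto
    ultimately show False
      using chord_not_acyclic[OF walk, of 0 j] j assms(2,5) \<open>p \<noteq> []\<close> by (simp add: hd_conv_nth)
  qed
qed

lemma longest_path_hd_edges:
  assumes "simple_graph V E" "acyclic_graph V E" "longest_path V E p" "length p \<ge> 2"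
  shows "{e \<in> E. hd p \<in> e} = {{hd p, p ! 1}}"
proof
  have "{p ! 0, p ! Suc 0} \<in> E"
    using assms(3,4) unfolding longest_path_def is_walk_def by auto
  moreover have "hd p = p ! 0"
    using assms(4) by (cases p) auto
  ultimately show "{{hd p, p ! 1}} \<subseteq> {e \<in> E. hd p \<in> e}"
    by simp
  show "{e \<in> E. hd p \<in> e} \<subseteq> {{hd p, p ! 1}}"
  proof
    fix e
    assume "e \<in> {e \<in> E. hd p \<in> e}"
    then obtain z where "e = {hd p, z}" "e \<in> E"
      using simple_graph_edge_other_end[OF assms(1)] by blast
    moreover from this have "z = p ! 1"
      using longest_path_hd_neighbour[OF assms] by (simp add: insert_commute)
    ultimately show "e \<in> {{hd p, p ! 1}}"
      by simp
  qed
qed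

text \<open>Such a neighbour \<open>z\<close> is either \<open>hd p\<close> or can replace \<open>hd p\<close> in a longest path.\<close>
lemma longest_path_second_vertex_leaves:
  assumes "simple_graph V E" "acyclic_graph V E" "longest_path V E p" "length p \<ge> 3"
    and "{z, p ! 1} \<in> E" "z \<noteq> p ! 2"
  shows "{e \<in> E. z \<in> e} = {{z, p ! 1}}"
proof -
  have walk: "is_walk V E p" "distinct p" and "p \<noteq> []"
    using assms(3,4) unfolding longest_path_def by auto
  show ?thesis
  proof (cases "z \<in> set p")
    case True
    then obtain j where j: "j < length p" "p ! j = z"
      by (metis in_set_conv_nth)
    have "j \<noteq> 1"
      using j simple_graph_edgeD[OF assms(1,5)] by auto
    moreover have "j \<noteq> 2"
      using j assms(6) by auto
    moreover have "\<not> 1 + 2 \<le> j"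
      using chord_not_acyclic[OF walk _ j(1)] assms(2,5) j(2) by auto
    ultimately have "j = 0"
      by linarith
    then have "z = hd p"
      using j \<open>p \<noteq> []\<close> by (simp add: hd_conv_nth)
    then show ?thesis
      using longest_path_hd_edges[OF assms(1-3)] assms(4) by simp
  next
    case False
    obtain x q where p: "p = x # q"
      using \<open>p \<noteq> []\<close> list.exhaust by blast
    then have "q \<noteq> []"
      using assms(4) by auto
    have "is_walk V E (z # q)" "distinct (z # q)"
      using p \<open>q \<noteq> []\<close> walk False assms(5) is_walk_Cons[OF \<open>q \<noteq> []\<close>]
        simple_graph_edgeD[OF assms(1,5)]
      by (auto simp: hd_conv_nth)
    then have "longest_path V E (z # q)"
      using assms(3) p unfolding longest_path_def by simp
    from longest_path_hd_edges[OF assms(1,2) this] show ?thesis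
      using assms(4) p by simp
  qed
qed

definition no_isolated_edge :: "'a set set \<Rightarrow> bool" where
  "no_isolated_edge E \<longleftrightarrow> (\<forall>e\<in>E. \<exists>e'\<in>E. e' \<noteq> e \<and> e \<inter> e' \<noteq> {})"

lemma longest_path_length_ge_3:
  assumes "simple_graph V E" "acyclic_graph V E" "no_isolated_edge E"
    and "longest_path V E p" "length p \<ge> 2"
  shows "length p \<ge> 3"
proof (rule ccontr)
  assume "\<not> length p \<ge> 3"
  with assms(5) obtain x y where p: "p = [x, y]"
    by (metis le_antisym not_less_eq_eq numeral_3_eq_3 numeral_2_eq_2 length_0_conv length_Suc_conv)
  then have "{x, y} \<in> E"
    using assms(4) unfolding longest_path_def is_walk_def by auto
  then obtain e where e: "e \<in> E" "e \<noteq> {x, y}" "{x, y} \<inter> e \<noteq> {}"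
    using assms(3) unfolding no_isolated_edge_def by metis
  have "{e \<in> E. x \<in> e} = {{x, y}}"
    using longest_path_hd_edges[OF assms(1,2,4,5)] p by simp
  with e have "y \<in> e"
    by blast
  then obtain z where z: "e = {y, z}" "z \<noteq> y"
    using simple_graph_edge_other_end[OF assms(1) e(1)] by blast
  with e have "z \<noteq> x" "{z, y} \<in> E"
    by (auto simp: insert_commute)
  with \<open>{x, y} \<in> E\<close> have "is_walk V E [z, y, x]" "distinct [z, y, x]"
    using simple_graph_edgeD[OF assms(1)] z(2) unfolding is_walk_def
    by (auto simp: less_Suc_eq insert_commute)
  then show False
    using assms(4) p unfolding longest_path_def by fastforce
qed

text \<open>\<open>E \<union> (\<lambda>l. {l, u}) ` L\<close> hangs the new leaves \<open>L\<close> on the leaf \<open>u\<close> of \<open>E\<close>,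
  whose only neighbour is \<open>y\<close>.\<close>
definition pendant_star :: "'a set set \<Rightarrow> 'a \<Rightarrow> 'a \<Rightarrow> 'a set \<Rightarrow> bool" where
  "pendant_star E u y L \<longleftrightarrow> finite L \<and> L \<noteq> {} \<and> u \<noteq> y \<and> {u, y} \<in> E \<and>
     (\<forall>e\<in>E. u \<in> e \<longrightarrow> e = {u, y}) \<and> (\<forall>l\<in>L. \<forall>e\<in>E. l \<notin> e)"

lemma pendant_starD:
  assumes "pendant_star E u y L"
  shows "finite L" "L \<noteq> {}" "u \<noteq> y" "{u, y} \<in> E"
    and "e \<in> E \<Longrightarrow> u \<in> e \<Longrightarrow> e = {u, y}" "l \<in> L \<Longrightarrow> e \<in> E \<Longrightarrow> l \<notin> e"
    and "u \<notin> L" "y \<notin> L"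
proof -
  show "finite L" "L \<noteq> {}" "u \<noteq> y" "{u, y} \<in> E"
    and "e \<in> E \<Longrightarrow> u \<in> e \<Longrightarrow> e = {u, y}" "l \<in> L \<Longrightarrow> e \<in> E \<Longrightarrow> l \<notin> e"
    using assms unfolding pendant_star_def by simp_all
  show "u \<notin> L" "y \<notin> L"
    using assms unfolding pendant_star_def by (metis insertCI)+
qed

lemma pendant_star_Diff_leaves:
  assumes "simple_graph V E" "{u, y} \<in> E" "u \<noteq> y" "finite L" "L \<noteq> {}"
    and "L = {z. {z, u} \<in> E \<and> z \<noteq> y}" "\<And>l. l \<in> L \<Longrightarrow> {e \<in> E. l \<in> e} = {{l, u}}"
  shows "pendant_star (E - (\<lambda>l. {l, u}) ` L) u y L"
proof -
  let ?E' = "E - (\<lambda>l. {l, u}) ` L"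
  have "{u, y} \<in> ?E'"
    using assms(2,3,6) by (auto simp: doubleton_eq_iff)
  moreover have "e = {u, y}" if e: "e \<in> ?E'" "u \<in> e" for e
  proof -
    have "e \<in> E" "e \<notin> (\<lambda>l. {l, u}) ` L"
      using e(1) by blast+
    moreover obtain z where "e = {u, z}"
      using simple_graph_edge_other_end[OF assms(1) \<open>e \<in> E\<close> e(2)] by blast
    ultimately have "{z, u} \<in> E" "z \<notin> L"
      by (auto simp: insert_commute)
    then have "z = y"
      using assms(6) by blast
    with \<open>e = {u, z}\<close> show ?thesis
      by simp
  qed
  moreover have "\<forall>l\<in>L. \<forall>e\<in>?E'. l \<notin> e"
    using assms(7) by blast
  ultimately show ?thesis
    unfolding pendant_star_def using assms(3-5) by blast
qed

lemma forest_pendant_star: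
  assumes "simple_graph V E" "acyclic_graph V E" "no_isolated_edge E" "E \<noteq> {}"
  obtains E' u y L where "pendant_star E' u y L" "E = E' \<union> (\<lambda>l. {l, u}) ` L"
proof -
  obtain p where p: "longest_path V E p" "length p \<ge> 2"
    using longest_path_exists[OF assms(1,4)] by blast
  then have "length p \<ge> 3"
    using longest_path_length_ge_3[OF assms(1-3)] by blast
  have walk: "is_walk V E p" "distinct p"
    using p(1) unfolding longest_path_def by auto
  define u where "u = p ! 1"
  define y where "y = p ! 2"
  define L where "L = {z. {z, u} \<in> E \<and> z \<noteq> y}"
  have leaves: "{e \<in> E. l \<in> e} = {{l, u}}" if "l \<in> L" for l
    using longest_path_second_vertex_leaves[OF assms(1,2) p(1) \<open>length p \<ge> 3\<close>] that
    unfolding L_def u_def y_def by blast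
  have "u \<noteq> y"
    using walk(2) \<open>length p \<ge> 3\<close> unfolding u_def y_def by (subst nth_eq_iff_index_eq) auto
  have "{p ! 1, p ! Suc 1} \<in> E" "{p ! 0, p ! Suc 0} \<in> E"
    using walk(1) \<open>length p \<ge> 3\<close> unfolding is_walk_def by auto
  then have "{u, y} \<in> E" "{p ! 0, u} \<in> E"
    unfolding u_def y_def by (simp_all add: numeral_2_eq_2)
  moreover have "p ! 0 \<noteq> y"
    using walk(2) \<open>length p \<ge> 3\<close> unfolding y_def by (subst nth_eq_iff_index_eq) auto
  ultimately have "L \<noteq> {}"
    unfolding L_def by blast
  have "L \<subseteq> V"
    unfolding L_def using simple_graph_edgeD[OF assms(1)] by blast
  then have "finite L"
    using assms(1) finite_subset unfolding simple_graph_def by blast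
  have "pendant_star (E - (\<lambda>l. {l, u}) ` L) u y L"
    using pendant_star_Diff_leaves[OF assms(1) \<open>{u, y} \<in> E\<close> \<open>u \<noteq> y\<close> \<open>finite L\<close>
        \<open>L \<noteq> {}\<close> L_def leaves] .
  moreover have "E = (E - (\<lambda>l. {l, u}) ` L) \<union> (\<lambda>l. {l, u}) ` L"
    unfolding L_def by auto
  ultimately show thesis
    by (rule that)
qed

lemma pendant_star_card_less:
  assumes "pendant_star E u y L" "finite (E \<union> (\<lambda>l. {l, u}) ` L)"
  shows "card E < card (E \<union> (\<lambda>l. {l, u}) ` L)"
proof -
  obtain l where "l \<in> L"
    using pendant_starD(2)[OF assms(1)] by blast
  then have "{l, u} \<notin> E"
    using pendant_starD(6)[OF assms(1)] by blast
  with \<open>l \<in> L\<close> have "E \<subset> E \<union> (\<lambda>l. {l, u}) ` L"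
    by blast
  then show ?thesis
    by (rule psubset_card_mono[OF assms(2)])
qed

text \<open>An edge of \<open>E\<close> other than \<open>{u, y}\<close> avoids \<open>u\<close> and \<open>L\<close>, so its neighbouring edges lie in \<open>E\<close>.\<close>
lemma pendant_star_neighbour_edge:
  assumes "no_isolated_edge (E \<union> (\<lambda>l. {l, u}) ` L)" "pendant_star E u y L"
    and "e \<in> E" "e \<noteq> {u, y}"
  obtains e' where "e' \<in> E" "e' \<noteq> e" "e \<inter> e' \<noteq> {}"
proof -
  obtain e' where e': "e' \<in> E \<union> (\<lambda>l. {l, u}) ` L" "e' \<noteq> e" "e \<inter> e' \<noteq> {}"
    using assms(1,3) unfolding no_isolated_edge_def by blast
  have "u \<notin> e" "\<forall>l\<in>L. l \<notin> e"
    using pendant_starD(5,6)[OF assms(2)] assms(3,4) by blast+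
  with e' have "e' \<in> E"
    by blast
  with e' show thesis
    using that by blast
qed

lemma no_isolated_edge_remove_pendant_star:
  assumes "no_isolated_edge (E \<union> (\<lambda>l. {l, u}) ` L)" "pendant_star E u y L"
    and "e\<^sub>y \<in> E" "y \<in> e\<^sub>y" "e\<^sub>y \<noteq> {u, y}"
  shows "no_isolated_edge E"
  unfolding no_isolated_edge_def
proof
  fix e
  assume "e \<in> E"
  show "\<exists>e'\<in>E. e' \<noteq> e \<and> e \<inter> e' \<noteq> {}"
  proof (cases "e = {u, y}")
    case True
    with assms(3-5) show ?thesis
      by blast
  next
    case False
    with pendant_star_neighbour_edge[OF assms(1,2) \<open>e \<in> E\<close>] show ?thesis
      by metis
  qed
qed

lemma no_isolated_edge_remove_pendant_component:
  assumes "no_isolated_edge (E \<union> (\<lambda>l. {l, u}) ` L)" "pendant_star E u y L"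
    and "\<forall>e\<in>E. y \<in> e \<longrightarrow> e = {u, y}"
  shows "no_isolated_edge (E - {{u, y}})"
  unfolding no_isolated_edge_def
proof
  fix e
  assume e: "e \<in> E - {{u, y}}"
  then have "u \<notin> e" "y \<notin> e"
    using pendant_starD(5)[OF assms(2)] assms(3) by blast+
  obtain e' where "e' \<in> E" "e' \<noteq> e" "e \<inter> e' \<noteq> {}"
    using pendant_star_neighbour_edge[OF assms(1,2)] e by blast
  moreover from this \<open>u \<notin> e\<close> \<open>y \<notin> e\<close> have "e' \<noteq> {u, y}"
    by blast
  ultimately show "\<exists>e'\<in>E - {{u, y}}. e' \<noteq> e \<and> e \<inter> e' \<noteq> {}"
    by blast
qed

definition sum_distinguishes ::
    "'a set set \<Rightarrow> 'a set set \<Rightarrow> ('a set \<Rightarrow> 'g::comm_monoid_add) \<Rightarrow> bool" where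
  "sum_distinguishes F E f \<longleftrightarrow> (\<forall>u v. {u, v} \<in> F \<longrightarrow> wsum E f u \<noteq> wsum E f v)"

lemma sum_distinguishes_subset:
  "sum_distinguishes F E f \<Longrightarrow> F' \<subseteq> F \<Longrightarrow> sum_distinguishes F' E f"
  unfolding sum_distinguishes_def by blast

lemma neq_on_doubleton: "{a, b} = {x, y} \<Longrightarrow> h x \<noteq> h y \<Longrightarrow> h a \<noteq> h b"
  by (auto simp: doubleton_eq_iff)

lemma wsum_cong:
  assumes "{e \<in> E. x \<in> e} = {e \<in> E'. x \<in> e}" "\<And>e. e \<in> E' \<Longrightarrow> x \<in> e \<Longrightarrow> f e = g e"
  shows "wsum E f x = wsum E' g x"
  unfolding wsum_def assms(1) using assms(2) by (intro sum.cong) auto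

lemma wsum_pendant_star_away:
  assumes "x \<noteq> u" "x \<notin> L" "\<And>e. e \<in> E \<Longrightarrow> f e = g e"
  shows "wsum (E \<union> (\<lambda>l. {l, u}) ` L) f x = wsum E g x"
  using assms by (intro wsum_cong) auto

lemma wsum_pendant_star_leaf:
  assumes "pendant_star E u y L" "l \<in> L"
  shows "wsum (E \<union> (\<lambda>l. {l, u}) ` L) f l = f {l, u}"
proof -
  have "{e \<in> E \<union> (\<lambda>l. {l, u}) ` L. l \<in> e} = {{l, u}}"
    using assms(2) pendant_starD(6,7)[OF assms(1)] by blast
  then show ?thesis
    unfolding wsum_def by simp
qed

lemma wsum_pendant_star_centre:
  assumes "pendant_star E u y L"
  shows "wsum (E \<union> (\<lambda>l. {l, u}) ` L) f u = f {u, y} + (\<Sum>l\<in>L. f {l, u})"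
proof -
  have "{e \<in> E \<union> (\<lambda>l. {l, u}) ` L. u \<in> e} = insert {u, y} ((\<lambda>l. {l, u}) ` L)"
    using pendant_starD(4,5)[OF assms] by blast
  moreover have "{u, y} \<notin> (\<lambda>l. {l, u}) ` L"
    using pendant_starD(3,8)[OF assms] by (auto simp: doubleton_eq_iff)
  moreover have "inj_on (\<lambda>l. {l, u}) L"
    using pendant_starD(7)[OF assms] by (auto simp: inj_on_def doubleton_eq_iff)
  ultimately show ?thesis
    using pendant_starD(1)[OF assms] unfolding wsum_def by (simp add: sum.reindex)
qed

lemma sum_distinguishes_pendant_star:
  assumes star: "pendant_star E u y L"
    and distinguishes: "sum_distinguishes (E - {{u, y}}) E f"
    and away: "\<And>x. x \<noteq> u \<Longrightarrow> x \<notin> L \<Longrightarrow> wsum (E \<union> (\<lambda>l. {l, u}) ` L) g x = wsum E f x"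
    and centre: "wsum (E \<union> (\<lambda>l. {l, u}) ` L) g u \<noteq> wsum E f y"
    and leaf: "\<And>l. l \<in> L \<Longrightarrow> wsum (E \<union> (\<lambda>l. {l, u}) ` L) g l \<noteq> wsum (E \<union> (\<lambda>l. {l, u}) ` L) g u"
  shows "sum_distinguishes (E \<union> (\<lambda>l. {l, u}) ` L) (E \<union> (\<lambda>l. {l, u}) ` L) g"
  unfolding sum_distinguishes_def
proof (intro allI impI)
  let ?E = "E \<union> (\<lambda>l. {l, u}) ` L"
  fix a b
  assume "{a, b} \<in> ?E"
  then consider "{a, b} = {u, y}" | "{a, b} \<in> E - {{u, y}}" | l where "l \<in> L" "{a, b} = {l, u}"
    by blast
  then show "wsum ?E g a \<noteq> wsum ?E g b"
  proof cases
    case 1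
    then show ?thesis
      using neq_on_doubleton[OF 1] centre away[of y] pendant_starD(3,8)[OF star] by metis
  next
    case 2
    then have "a \<noteq> u" "b \<noteq> u" "a \<notin> L" "b \<notin> L"
      using pendant_starD(5,6)[OF star] by blast+
    then show ?thesis
      using 2 distinguishes away unfolding sum_distinguishes_def by metis
  next
    case 3
    then show ?thesis
      using neq_on_doubleton[OF 3(2)] leaf by metis
  qed
qed

lemma extend_labeling_pendant_star:
  fixes f :: "'a set \<Rightarrow> 'g::ab_group_add"
  assumes order_ge_4: "infinite (UNIV :: 'g set) \<or> card (UNIV :: 'g set) \<ge> 4"
    and star: "pendant_star E u y L"
    and nonzero: "\<forall>e\<in>E. f e \<noteq> 0" and distinguishes: "sum_distinguishes (E - {{u, y}}) E f"
  obtains g :: "'a set \<Rightarrow> 'g" where "\<forall>e\<in>E \<union> (\<lambda>l. {l, u}) ` L. g e \<noteq> 0"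
    "sum_distinguishes (E \<union> (\<lambda>l. {l, u}) ` L) (E \<union> (\<lambda>l. {l, u}) ` L) g"
proof -
  let ?E = "E \<union> (\<lambda>l. {l, u}) ` L"
  obtain l\<^sub>0 where "l\<^sub>0 \<in> L"
    using pendant_starD(2)[OF star] by blast
  have "f {u, y} \<noteq> 0"
    using nonzero pendant_starD(4)[OF star] by blast
  then obtain c z where cz: "c \<noteq> 0" "z \<noteq> 0" "f {u, y} + (\<Sum>_\<in>L - {l\<^sub>0}. c) \<noteq> 0"
    "f {u, y} + (\<Sum>_\<in>L - {l\<^sub>0}. c) + z \<noteq> wsum E f y" "f {u, y} + (\<Sum>_\<in>L - {l\<^sub>0}. c) + z \<noteq> c"
    using ex_pendant_star_weights[OF order_ge_4] by metis
  define g where "g e = (if e \<in> E then f e else if e = {l\<^sub>0, u} then z else c)" for e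
  have g_star: "g {l, u} = (if l = l\<^sub>0 then z else c)" if "l \<in> L" for l
    using that \<open>l\<^sub>0 \<in> L\<close> pendant_starD(6,7)[OF star] unfolding g_def
    by (auto simp: doubleton_eq_iff)
  have "(\<Sum>l\<in>L. g {l, u}) = (\<Sum>l\<in>L. if l = l\<^sub>0 then z else c)"
    using g_star by (rule sum.cong[OF refl])
  also have "\<dots> = z + (\<Sum>_\<in>L - {l\<^sub>0}. c)"
    using pendant_starD(1)[OF star] \<open>l\<^sub>0 \<in> L\<close> by (simp add: sum.remove)
  moreover have "g {u, y} = f {u, y}"
    using pendant_starD(4)[OF star] unfolding g_def by simp
  ultimately have centre: "wsum ?E g u = f {u, y} + (\<Sum>_\<in>L - {l\<^sub>0}. c) + z"
    unfolding wsum_pendant_star_centre[OF star] by (simp add: algebra_simps)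
  have away: "wsum ?E g x = wsum E f x" if "x \<noteq> u" "x \<notin> L" for x
    using that unfolding g_def by (intro wsum_pendant_star_away) auto
  have "wsum ?E g l \<noteq> wsum ?E g u" if "l \<in> L" for l
    using wsum_pendant_star_leaf[OF star that, where f = g] g_star[OF that] centre cz(3,5) by auto
  with centre cz(4) have "sum_distinguishes ?E ?E g"
    by (intro sum_distinguishes_pendant_star[OF star distinguishes away]) auto
  moreover have "\<forall>e\<in>?E. g e \<noteq> 0"
    using nonzero cz(1,2) unfolding g_def by auto
  ultimately show thesis
    using that by blast
qed

lemma labeling_insert_isolated_edge:
  assumes "\<forall>e\<in>E. u \<notin> e \<and> y \<notin> e"
    and "\<forall>e\<in>E. f e \<noteq> 0" "sum_distinguishes E E f" "b \<noteq> 0"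
  shows "\<forall>e\<in>insert {u, y} E. (f({u, y} := b)) e \<noteq> 0"
    and "sum_distinguishes E (insert {u, y} E) (f({u, y} := b))"
proof -
  have "{u, y} \<notin> E"
    using assms(1) by blast
  then show "\<forall>e\<in>insert {u, y} E. (f({u, y} := b)) e \<noteq> 0"
    using assms(2,4) by auto
  have "wsum (insert {u, y} E) (f({u, y} := b)) x = wsum E f x" if "x \<noteq> u" "x \<noteq> y" for x
    using that \<open>{u, y} \<notin> E\<close> by (intro wsum_cong) auto
  moreover have "a \<noteq> u \<and> a \<noteq> y" if "{a, a'} \<in> E \<or> {a', a} \<in> E" for a a'
    using assms(1) that by blast
  ultimately show "sum_distinguishes E (insert {u, y} E) (f({u, y} := b))"
    using assms(3) unfolding sum_distinguishes_def by metis
qed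

lemma ex_labeling_except_pendant_edge:
  assumes order_ge_4: "infinite (UNIV :: 'g set) \<or> card (UNIV :: 'g set) \<ge> 4"
    and star: "pendant_star E u y L" and "no_isolated_edge (E \<union> (\<lambda>l. {l, u}) ` L)"
    and labeling: "\<And>F. F \<subseteq> E \<Longrightarrow> no_isolated_edge F \<Longrightarrow>
      \<exists>f :: 'a set \<Rightarrow> 'g. (\<forall>e\<in>F. f e \<noteq> 0) \<and> sum_distinguishes F F f"
  obtains f :: "'a set \<Rightarrow> 'g::ab_group_add"
  where "\<forall>e\<in>E. f e \<noteq> 0" "sum_distinguishes (E - {{u, y}}) E f"
proof (cases "\<exists>e\<in>E. y \<in> e \<and> e \<noteq> {u, y}")
  case True
  then have "no_isolated_edge E"
    using no_isolated_edge_remove_pendant_star[OF assms(3) star] by blast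
  then show thesis
    using labeling[OF order_refl] sum_distinguishes_subset that by blast
next
  case False
  let ?E\<^sub>1 = "E - {{u, y}}"
  have "no_isolated_edge ?E\<^sub>1"
    using no_isolated_edge_remove_pendant_component[OF assms(3) star] False by blast
  then obtain f\<^sub>1 :: "'a set \<Rightarrow> 'g"
    where f\<^sub>1: "\<forall>e\<in>?E\<^sub>1. f\<^sub>1 e \<noteq> 0" "sum_distinguishes ?E\<^sub>1 ?E\<^sub>1 f\<^sub>1"
    using labeling[of ?E\<^sub>1] by blast
  obtain b :: 'g where "b \<noteq> 0"
    using ex_not_in_three[OF order_ge_4] by blast
  have "\<forall>e\<in>?E\<^sub>1. u \<notin> e \<and> y \<notin> e"
    using pendant_starD(5)[OF star] False by blast
  from labeling_insert_isolated_edge[OF this f\<^sub>1 \<open>b \<noteq> 0\<close>] show thesis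
    using that insert_Diff[OF pendant_starD(4)[OF star]] by metis
qed

lemma forest_labeling:
  fixes E :: "'a set set"
  assumes order_ge_4: "infinite (UNIV :: 'g::ab_group_add set) \<or> card (UNIV :: 'g set) \<ge> 4"
  shows "simple_graph V E \<Longrightarrow> acyclic_graph V E \<Longrightarrow> no_isolated_edge E \<Longrightarrow>
    \<exists>f :: 'a set \<Rightarrow> 'g. (\<forall>e\<in>E. f e \<noteq> 0) \<and> sum_distinguishes E E f"
proof (induction "card E" arbitrary: E rule: less_induct)
  case less
  show ?case
  proof (cases "E = {}")
    case True
    then show ?thesis
      unfolding sum_distinguishes_def by simp
  next
    case False
    obtain E' u y L where star: "pendant_star E' u y L" and E: "E = E' \<union> (\<lambda>l. {l, u}) ` L"
      using forest_pendant_star[OF less.prems False] by blast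
    have "finite E"
      using simple_graph_finite_edges[OF less.prems(1)] .
    then have "card F < card E" if "F \<subseteq> E'" for F
      using pendant_star_card_less[OF star] card_mono[of E' F] that E
      by (metis finite_Un le_less_trans)
    moreover have "simple_graph V F" "acyclic_graph V F" if "F \<subseteq> E'" for F
      using that E simple_graph_subset[OF less.prems(1)] acyclic_graph_subset[OF less.prems(2)]
      by blast+
    ultimately obtain f :: "'a set \<Rightarrow> 'g"
      where "\<forall>e\<in>E'. f e \<noteq> 0" "sum_distinguishes (E' - {{u, y}}) E' f"
      using ex_labeling_except_pendant_edge[OF order_ge_4 star] less.hyps less.prems(3) E
      by metis
    then show ?thesis
      using extend_labeling_pendant_star[OF order_ge_4 star] E by metis
  qed
qed

lemma walk_within_isolated_edge:
  assumes "is_walk V E p" "e \<in> E" "\<forall>e'\<in>E. e' \<noteq> e \<longrightarrow> e \<inter> e' = {}" "hd p \<in> e"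
  shows "set p \<subseteq> e"
  using assms(1,4)
proof (induction p)
  case Nil
  then show ?case
    by simp
next
  case (Cons x q)
  show ?case
  proof (cases "q = []")
    case True
    with Cons.prems show ?thesis
      by simp
  next
    case False
    with Cons.prems have "{x, hd q} \<in> E" "is_walk V E q" "x \<in> e"
      using is_walk_Cons[OF False] by auto
    with assms(3) have "hd q \<in> e"
      by blast
    with Cons.IH \<open>is_walk V E q\<close> \<open>x \<in> e\<close> show ?thesis
      by simp
  qed
qed

lemma connected_no_isolated_edge:
  assumes "simple_graph V E" "connected_graph V E" "card V \<ge> 3"
  shows "no_isolated_edge E"
  unfolding no_isolated_edge_def
proof (rule ccontr)
  assume "\<not> (\<forall>e\<in>E. \<exists>e'\<in>E. e' \<noteq> e \<and> e \<inter> e' \<noteq> {})"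
  then obtain e where e: "e \<in> E" "\<forall>e'\<in>E. e' \<noteq> e \<longrightarrow> e \<inter> e' = {}"
    by blast
  then obtain x y where "e = {x, y}" "x \<in> V" "y \<in> V"
    using assms(1) unfolding simple_graph_def by metis
  moreover have "\<not> V \<subseteq> e"
  proof
    assume "V \<subseteq> e"
    then have "card V \<le> card {x, y}"
      using \<open>e = {x, y}\<close> by (intro card_mono) auto
    also have "\<dots> \<le> 2"
      using card_length[of "[x, y]"] by simp
    finally show False
      using assms(3) by simp
  qed
  then obtain w where "w \<in> V" "w \<notin> e"
    by blast
  moreover obtain p where "is_walk V E p" "hd p = x" "last p = w"
    using assms(2) \<open>x \<in> V\<close> \<open>w \<in> V\<close> unfolding connected_graph_def by blast
  moreover from this have "p \<noteq> []"
    unfolding is_walk_def by simp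
  ultimately show False
    using walk_within_isolated_edge[of V E p e] e \<open>e = {x, y}\<close> last_in_set by fastforce
qed

theorem theorem5:
  fixes V :: "'a set" and E :: "'a set set"
  assumes "tree V E" and "card V \<ge> 3"
    and "infinite (UNIV :: 'g::ab_group_add set) \<or> card (UNIV :: 'g set) \<ge> 4"
  shows "\<exists>f :: 'a set \<Rightarrow> 'g. (\<forall>e\<in>E. f e \<noteq> 0) \<and>
           (\<forall>u v. {u, v} \<in> E \<longrightarrow> wsum E f u \<noteq> wsum E f v)"
proof -
  have "simple_graph V E" "acyclic_graph V E" "connected_graph V E"
    using assms(1) unfolding tree_def by auto
  then have "no_isolated_edge E"
    using connected_no_isolated_edge assms(2) by blast
  then show ?thesis
    using forest_labeling[OF assms(3)] \<open>simple_graph V E\<close> \<open>acyclic_graph V E\<close>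
    unfolding sum_distinguishes_def by blast
qed

end
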